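(* Let $1\le i\le N$ and $w_1,w_2\in\mathcal A_i$ with $w_1\ne w_2$, and let $w_1^{-1}w_2=\prod_{\ell=1}^dA_{i_\ell,j_\ell}^{(k_\ell)}$, $d\ge1$, be the reduced representation of $w_1^{-1}w_2$. Then, as power series in $\lambda$ (in particular for all $|\lambda|\le1$), $$\mathcal R(w_1,w_2;\lambda)=\prod_{\ell=1}^dR_{i_\ell,j_\ell}^{(k_\ell)}(\lambda).$$
   Context: Fix an integer $N\ge 3$. Let $\mathcal G_N$ be the groupoid with object set $\{1,\dots,N\}$ generated by arrows $A_{i,j}^{(k)}$, $i\neq j\in\{1,\dots,N\}$, $k\in\{-1,1\}$, with source $i$ and target $j$, subject to the relations $A_{i,j}^{(k)}A_{j,\ell}^{(k)}=A_{i,\ell}^{(k)}$ for all $i,j,\ell$, $k$, with the convention $A_{i,i}^{(k)}:=e_i$ (unit at object $i$). Let $\mathcal A$ be its arrow set and $\mathcal A_i$ the set of arrows with source $i$. Every arrow has a unique reduced representation: either empty or $A_{i_1,i_2}^{(k)}A_{i_2,i_3}^{(-k)}\cdots A_{i_d,i_{d+1}}^{((-1)^{d+1}k)}$ with $d\ge1$, $i_\ell\ne i_{\ell+1}$. Let $\{W_n\}_{n\ge0}$ be the Markov chain on $\mathcal A$ with $P(W_{n+1}=y\mid W_n=x)=p_{i,j}^{(k)}$ if $x^{-1}y=A_{i,j}^{(k)}$ with $i\ne j$ and $0$ otherwise, where $p_{i,j}^{(k)}\in(0,1)$ and $\sum_{j\ne i}\sum_{k=\pm1}p_{i,j}^{(k)}=1$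 for each $i$; $P_x,E_x$ denote law and expectation with $W_0=x$. For $y\in\mathcal A$ let $\tau_y=\inf\{n\ge0:W_n=y\}$ and $\mathcal R(x,y;\lambda)=\sum_{n\ge0}P_x(\tau_y=n)\lambda^n$. For $x\in\mathcal A$ let $T(0,x)=\inf\{n\ge0:W_n=W_0x\}$ (possibly $\infty$) and $R_{i,j}^{(k)}(\lambda)=E_{e_i}[\lambda^{T(0,A_{i,j}^{(k)})}]$. *)

theory Defs
  imports "HOL-Analysis.Analysis" "HOL-Computational_Algebra.Formal_Power_Series"
begin

text \<open>Letters (a,b,k) stand for the generator A_{a,b}^{(k)}.  An arrow is encoded by its
source together with its reduced word: (s, []) is the unit e_s.\<close>

type_synonym letter = "nat \<times> nat \<times> int"
type_synonym arrow = "nat \<times> letter list"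

definition src :: "arrow \<Rightarrow> nat" where
  "src x = fst x"

definition tgt :: "arrow \<Rightarrow> nat" where
  "tgt x = (if snd x = [] then fst x else fst (snd (last (snd x))))"

definition reduced_word :: "nat \<Rightarrow> nat \<Rightarrow> letter list \<Rightarrow> bool" where
  "reduced_word N i ls \<longleftrightarrow>
     (\<forall>l < length ls. fst (ls!l) \<in> {1..N} \<and> fst (snd (ls!l)) \<in> {1..N}
        \<and> fst (ls!l) \<noteq> fst (snd (ls!l)) \<and> snd (snd (ls!l)) \<in> {-1, 1})
   \<and> (ls \<noteq> [] \<longrightarrow> fst (ls!0) = i)
   \<and> (\<forall>l. Suc l < length ls \<longrightarrow> fst (snd (ls!l)) = fst (ls!Suc l)
        \<and> snd (snd (ls!Suc l)) = - snd (snd (ls!l)))"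

definition arrows_from :: "nat \<Rightarrow> nat \<Rightarrow> arrow set" where
  "arrows_from N i = {(i, ls) | ls. reduced_word N i ls}"

text \<open>Right multiplication of an arrow x by a generator A_{a,b}^{(k)} with a = tgt x,
  using the relations A_{c,a}^{(k)} A_{a,b}^{(k)} = A_{c,b}^{(k)}, A_{c,c}^{(k)} = e_c.\<close>
definition app_letter :: "arrow \<Rightarrow> letter \<Rightarrow> arrow" where
  "app_letter x l =
     (let s = fst x; ls = snd x; a = fst l; b = fst (snd l); k = snd (snd l) in
      if ls \<noteq> [] \<and> snd (snd (last ls)) = k then
        (let c = fst (last ls) in
          if c = b then (s, butlast ls) else (s, butlast ls @ [(c, b, k)]))
      else (s, ls @ [(a, b, k)]))"

definition gmult :: "arrow \<Rightarrow> arrow \<Rightarrow> arrow" where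
  "gmult x y = foldl app_letter x (snd y)"

definition ginv :: "arrow \<Rightarrow> arrow" where
  "ginv x = (tgt x, rev (map (\<lambda>(a, b, k). (b, a, k)) (snd x)))"

text \<open>Markov chain: a move (j,k) from x goes to x A_{tgt x, j}^{(k)} with probability
  p (tgt x) j k (zero if j = tgt x, which is not an allowed move).\<close>
definition move :: "arrow \<Rightarrow> nat \<times> int \<Rightarrow> arrow" where
  "move x m = app_letter x (tgt x, fst m, snd m)"

fun walk :: "arrow \<Rightarrow> (nat \<times> int) list \<Rightarrow> arrow list" where
  "walk x [] = [x]"
| "walk x (m # ms) = x # walk (move x m) ms"

fun pathprob :: "(nat \<Rightarrow> nat \<Rightarrow> int \<Rightarrow> real) \<Rightarrow> arrow \<Rightarrow> (nat \<times> int) list \<Rightarrow> real" where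
  "pathprob p x [] = 1"
| "pathprob p x (m # ms) =
     (if fst m \<noteq> tgt x then p (tgt x) (fst m) (snd m) else 0) * pathprob p (move x m) ms"

text \<open>P_x(tau_y = n): sum of the probabilities of the length-n paths from x that
  first visit y at time n.\<close>
definition hitprob :: "nat \<Rightarrow> (nat \<Rightarrow> nat \<Rightarrow> int \<Rightarrow> real) \<Rightarrow> arrow \<Rightarrow> arrow \<Rightarrow> nat \<Rightarrow> real" where
  "hitprob N p x y n =
     (\<Sum>ms \<in> {ms. length ms = n \<and> set ms \<subseteq> {1..N} \<times> {-1, 1}}.
        (if (\<forall>m < n. walk x ms ! m \<noteq> y) \<and> walk x ms ! n = y then pathprob p x ms else 0))"

definition RR_fps :: "nat \<Rightarrow> (nat \<Rightarrow> nat \<Rightarrow> int \<Rightarrow> real) \<Rightarrow> arrow \<Rightarrow> arrow \<Rightarrow> real fps" where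
  "RR_fps N p x y = Abs_fps (hitprob N p x y)"

definition RR :: "nat \<Rightarrow> (nat \<Rightarrow> nat \<Rightarrow> int \<Rightarrow> real) \<Rightarrow> arrow \<Rightarrow> arrow \<Rightarrow> complex \<Rightarrow> complex" where
  "RR N p x y z = (\<Sum>n. complex_of_real (hitprob N p x y n) * z ^ n)"

text \<open>R_{i,j}^{(k)}: generating function of T(0, A_{i,j}^{(k)}) started at e_i, i.e. of the
  first hitting time of e_i A_{i,j}^{(k)} = A_{i,j}^{(k)} (lambda^infinity counted as 0).\<close>
definition Rgen_fps :: "nat \<Rightarrow> (nat \<Rightarrow> nat \<Rightarrow> int \<Rightarrow> real) \<Rightarrow> nat \<Rightarrow> nat \<Rightarrow> int \<Rightarrow> real fps" where
  "Rgen_fps N p i j k = RR_fps N p (i, []) (gmult (i, []) (i, [(i, j, k)]))"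

definition Rgen :: "nat \<Rightarrow> (nat \<Rightarrow> nat \<Rightarrow> int \<Rightarrow> real) \<Rightarrow> nat \<Rightarrow> nat \<Rightarrow> int \<Rightarrow> complex \<Rightarrow> complex" where
  "Rgen N p i j k z = RR N p (i, []) (gmult (i, []) (i, [(i, j, k)])) z"

definition valid_probs :: "nat \<Rightarrow> (nat \<Rightarrow> nat \<Rightarrow> int \<Rightarrow> real) \<Rightarrow> bool" where
  "valid_probs N p \<longleftrightarrow>
     (\<forall>i \<in> {1..N}. \<forall>j \<in> {1..N}. \<forall>k \<in> {-1, 1}. j \<noteq> i \<longrightarrow> 0 < p i j k \<and> p i j k < 1)
   \<and> (\<forall>i \<in> {1..N}. (\<Sum>j \<in> {1..N} - {i}. \<Sum>k \<in> {-1, 1}. p i j k) = 1)"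

end

theory Submission
  imports Defs
begin

text \<open>The walk is invariant under left translation in the groupoid, so
  \<open>\<R>(w\<^sub>1, w\<^sub>2) = \<R>(e, w\<^sub>1\<^sup>-\<^sup>1 w\<^sub>2)\<close>. A step only changes the last letter of the reduced
  word of the current position, so the reduced words form a tree: a walk from \<open>e\<close> to a reduced
  word \<open>l v\<close> (with \<open>v\<close> nonempty) must visit the one-letter arrow \<open>l\<close> first. Splitting at the
  first such visit gives \<open>\<R>(e, l v) = \<R>(e, l) \<R>(l, l v) = R\<^sub>l \<R>(e, v)\<close>, and induction on the
  word yields the product formula for power series. All coefficients are nonnegative with
  total mass at most one, so every series converges absolutely on the closed unit disc and the
  Cauchy product turns the identity of power series into one of values.\<close>

section \<open>The groupoid of reduced words\<close>

text \<open>Signs of consecutive letters are only required to differ, not to be opposite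
  elements of \<open>{-1, 1}\<close>.\<close>

fun reduced_chain :: "nat \<Rightarrow> letter list \<Rightarrow> bool" where
  "reduced_chain s [] = True"
| "reduced_chain s (l # ls) \<longleftrightarrow> fst l = s \<and> fst l \<noteq> fst (snd l)
     \<and> (ls \<noteq> [] \<longrightarrow> snd (snd (hd ls)) \<noteq> snd (snd l)) \<and> reduced_chain (fst (snd l)) ls"

definition reduced_arrow :: "arrow \<Rightarrow> bool" where
  "reduced_arrow x \<longleftrightarrow> reduced_chain (fst x) (snd x)"

lemma tgt_Nil [simp]: "tgt (s, []) = s"
  by (simp add: tgt_def)

lemma tgt_append [simp]: "tgt (s, xs @ ys) = tgt (tgt (s, xs), ys)"
  by (simp add: tgt_def)

lemma tgt_Cons [simp]: "tgt (s, l # ls) = tgt (fst (snd l), ls)"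
  by (simp add: tgt_def)

lemma reduced_chain_append:
  "reduced_chain s (xs @ ys) \<longleftrightarrow> reduced_chain s xs \<and> reduced_chain (tgt (s, xs)) ys
     \<and> (xs \<noteq> [] \<longrightarrow> ys \<noteq> [] \<longrightarrow> snd (snd (hd ys)) \<noteq> snd (snd (last xs)))"
  by (induction xs arbitrary: s) (auto simp: neq_Nil_conv)

lemma reduced_chain_snoc:
  "reduced_chain s (ls @ [(c, a, k)]) \<longleftrightarrow> reduced_chain s ls \<and> c = tgt (s, ls) \<and> c \<noteq> a
     \<and> (ls \<noteq> [] \<longrightarrow> k \<noteq> snd (snd (last ls)))"
  by (auto simp: reduced_chain_append)

lemma fst_app_letter [simp]: "fst (app_letter x l) = fst x"
  by (simp add: app_letter_def Let_def)

lemma app_letter_Nil [simp]: "app_letter (s, []) (a, b, k) = (s, [(a, b, k)])"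
  by (simp add: app_letter_def)

lemma app_letter_snoc [simp]:
  "app_letter (s, ls @ [(c, a, k')]) (a', b, k) =
    (if k' = k then (if c = b then (s, ls) else (s, ls @ [(c, b, k)]))
     else (s, ls @ [(c, a, k'), (a', b, k)]))"
  by (simp add: app_letter_def Let_def)

lemma app_letter_single [simp]:
  "app_letter (s, [(c, a, k')]) (a', b, k) =
    (if k' = k then (if c = b then (s, []) else (s, [(c, b, k)]))
     else (s, [(c, a, k'), (a', b, k)]))"
  using app_letter_snoc[of s "[]"] by simp

lemma app_letter_no_merge:
  "ls = [] \<or> snd (snd (last ls)) \<noteq> k \<Longrightarrow> app_letter (s, ls) (a, b, k) = (s, ls @ [(a, b, k)])"
  by (auto simp: app_letter_def Let_def)

lemma reduced_chain_app_letter: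
  assumes "reduced_chain s ls" "a = tgt (s, ls)" "a \<noteq> b"
  shows "reduced_chain s (snd (app_letter (s, ls) (a, b, k)))"
    and "tgt (app_letter (s, ls) (a, b, k)) = b"
proof -
  have "reduced_chain s (snd (app_letter (s, ls) (a, b, k))) \<and> tgt (app_letter (s, ls) (a, b, k)) = b"
  proof (cases ls rule: rev_exhaust)
    case Nil
    then show ?thesis using assms by simp
  next
    case (snoc ys l)
    obtain c a0 k0 where "l = (c, a0, k0)" by (cases l)
    then show ?thesis using assms unfolding snoc
      by (cases "ys = []") (auto simp: reduced_chain_snoc reduced_chain_append)
  qed
  then show "reduced_chain s (snd (app_letter (s, ls) (a, b, k)))"
    and "tgt (app_letter (s, ls) (a, b, k)) = b" by auto
qed

lemma foldl_app_letter_reduced: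
  "reduced_chain s (xs @ ys) \<Longrightarrow> foldl app_letter (s, xs) ys = (s, xs @ ys)"
proof (induction ys arbitrary: xs)
  case Nil
  then show ?case by simp
next
  case (Cons y ys)
  obtain a b k where y: "y = (a, b, k)" by (cases y)
  have "xs = [] \<or> snd (snd (last xs)) \<noteq> k"
    using Cons.prems unfolding y by (auto simp: reduced_chain_append)
  then have "app_letter (s, xs) y = (s, xs @ [y])" by (simp add: y app_letter_no_merge)
  then show ?case using Cons.IH[of "xs @ [y]"] Cons.prems by simp
qed

lemma reduced_chain_foldl_app_letter:
  assumes "reduced_arrow g" "reduced_chain (tgt g) ls"
  shows "reduced_arrow (foldl app_letter g ls)" and "tgt (foldl app_letter g ls) = tgt (tgt g, ls)"
    and "fst (foldl app_letter g ls) = fst g"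
proof -
  have "reduced_arrow (foldl app_letter g ls) \<and> tgt (foldl app_letter g ls) = tgt (tgt g, ls)
    \<and> fst (foldl app_letter g ls) = fst g"
    using assms(2)
  proof (induction ls rule: rev_induct)
    case Nil
    then show ?case using assms(1) by simp
  next
    case (snoc l ls)
    obtain a b k where l: "l = (a, b, k)" by (cases l)
    have ls: "reduced_chain (tgt g) ls" "a = tgt (tgt g, ls)" "a \<noteq> b"
      using snoc.prems unfolding l by (auto simp: reduced_chain_snoc)
    define h where "h = foldl app_letter g ls"
    have h: "reduced_chain (fst h) (snd h)" "tgt h = a" "fst h = fst g"
      using snoc.IH[OF ls(1)] ls unfolding h_def reduced_arrow_def by auto
    have "reduced_chain (fst h) (snd (app_letter h (a, b, k)))" "tgt (app_letter h (a, b, k)) = b"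
      using reduced_chain_app_letter[of "fst h" "snd h" a b k] h(1,2) ls(3) by simp_all
    then show ?case using h(3) unfolding l h_def reduced_arrow_def by simp
  qed
  then show "reduced_arrow (foldl app_letter g ls)" "tgt (foldl app_letter g ls) = tgt (tgt g, ls)"
    "fst (foldl app_letter g ls) = fst g" by auto
qed

lemma gmult_reduced:
  assumes "reduced_arrow g" "reduced_arrow u" "fst u = tgt g"
  shows "reduced_arrow (gmult g u)" and "tgt (gmult g u) = tgt u" and "fst (gmult g u) = fst g"
proof -
  have "reduced_chain (tgt g) (snd u)" and "tgt (tgt g, snd u) = tgt u"
    using assms(2) by (simp_all add: reduced_arrow_def flip: assms(3))
  then show "reduced_arrow (gmult g u)" "tgt (gmult g u) = tgt u" "fst (gmult g u) = fst g"
    using reduced_chain_foldl_app_letter[OF assms(1)] by (auto simp: gmult_def)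
qed

lemma gmult_unit_left: "reduced_arrow u \<Longrightarrow> gmult (fst u, []) u = u"
  using foldl_app_letter_reduced[of "fst u" "[]" "snd u"] by (simp add: reduced_arrow_def gmult_def)

lemma app_letter_relation:
  assumes "reduced_chain s ls" "c = tgt (s, ls)" "c \<noteq> a" "a \<noteq> b"
  shows "app_letter (app_letter (s, ls) (c, a, k)) (a, b, k)
    = (if c = b then (s, ls) else app_letter (s, ls) (c, b, k))"
proof (cases ls rule: rev_exhaust)
  case Nil
  then show ?thesis using assms by (simp add: app_letter_def)
next
  case (snoc ys l)
  obtain e x k' where l: "l = (e, x, k')" by (cases l)
  have ys: "ys = [] \<or> snd (snd (last ys)) \<noteq> k'" "x = c" "e \<noteq> x"
    using assms unfolding snoc l by (auto simp: reduced_chain_snoc)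
  show ?thesis
  proof (cases "k' = k")
    case True
    then show ?thesis using ys assms unfolding snoc l
      by (auto simp: app_letter_no_merge simp flip: append_assoc)
  next
    case False
    then show ?thesis using ys assms unfolding snoc l by (auto simp: app_letter_def Let_def butlast_append)
  qed
qed

lemma gmult_app_letter:
  assumes "reduced_arrow g" "reduced_arrow u" "fst u = tgt g" "a = tgt u" "a \<noteq> b"
  shows "gmult g (app_letter u (a, b, k)) = app_letter (gmult g u) (a, b, k)"
proof -
  obtain s ls where u: "u = (s, ls)" by (cases u)
  show ?thesis
  proof (cases ls rule: rev_exhaust)
    case Nil
    then show ?thesis using u by (simp add: gmult_def)
  next
    case (snoc ys l)
    obtain c a' k' where l: "l = (c, a', k')" by (cases l)
    have ys: "reduced_chain s ys" "c = tgt (s, ys)" "c \<noteq> a" "a' = a"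
      using assms(2,4) unfolding u snoc l reduced_arrow_def by (auto simp: reduced_chain_snoc)
    show ?thesis
    proof (cases "k' = k")
      case False
      then show ?thesis unfolding u snoc l using ys by (simp add: gmult_def)
    next
      case True
      define h where "h = foldl app_letter g ys"
      have "s = tgt g" using assms(3) u by simp
      then have h: "reduced_chain (fst h) (snd h)" "tgt h = c"
        using reduced_chain_foldl_app_letter[of g ys] assms(1) ys
        unfolding h_def reduced_arrow_def by auto
      have "gmult g (app_letter u (a, b, k)) = (if c = b then h else app_letter h (c, b, k))"
        unfolding u snoc l using ys(4) True by (simp add: gmult_def h_def)
      also have "\<dots> = app_letter (app_letter h (c, a, k)) (a, b, k)"
        using app_letter_relation[of "fst h" "snd h" c a b k] h ys(3) assms(5) by simp
      also have "\<dots> = app_letter (gmult g u) (a, b, k)"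
        unfolding u snoc l using ys(4) True by (simp add: gmult_def h_def)
      finally show ?thesis .
    qed
  qed
qed

lemma gmult_assoc:
  assumes "reduced_arrow g" "reduced_arrow u" "reduced_arrow v" "fst u = tgt g" "fst v = tgt u"
  shows "gmult g (gmult u v) = gmult (gmult g u) v"
proof -
  obtain s ls where v: "v = (s, ls)" by (cases v)
  have "reduced_chain s ls" "s = tgt u" using assms(3,5) v by (auto simp: reduced_arrow_def)
  then show ?thesis unfolding v
  proof (induction ls rule: rev_induct)
    case Nil
    then show ?case by (simp add: gmult_def)
  next
    case (snoc l ls)
    obtain a b k where l: "l = (a, b, k)" by (cases l)
    have ls: "reduced_chain s ls" "a = tgt (s, ls)" "a \<noteq> b"
      using snoc.prems unfolding l by (auto simp: reduced_chain_snoc)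
    define m where "m = gmult u (s, ls)"
    have m: "reduced_arrow m" "tgt m = a" "fst m = tgt g"
      using gmult_reduced[of u "(s, ls)"] assms(2,4) ls snoc.prems
      unfolding m_def reduced_arrow_def by auto
    have "gmult g (gmult u (s, ls @ [l])) = gmult g (app_letter m l)"
      by (simp add: gmult_def m_def)
    also have "\<dots> = app_letter (gmult g m) l"
      unfolding l by (rule gmult_app_letter) (use m assms ls in auto)
    also have "\<dots> = gmult (gmult g u) (s, ls @ [l])"
      using snoc.IH[OF ls(1) snoc.prems(2)] by (simp add: gmult_def m_def)
    finally show ?case .
  qed
qed

definition flip_letter :: "letter \<Rightarrow> letter" where
  "flip_letter l = (fst (snd l), fst l, snd (snd l))"

lemma flip_letter_simps [simp]:
  "flip_letter (a, b, k) = (b, a, k)" "flip_letter (flip_letter l) = l"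
  "snd (snd (flip_letter l)) = snd (snd l)"
  by (simp_all add: flip_letter_def)

lemma ginv_flip_letter: "ginv x = (tgt x, rev (map flip_letter (snd x)))"
  by (simp add: ginv_def flip_letter_def case_prod_beta)

lemma reduced_chain_rev_flip:
  "reduced_chain s ls \<Longrightarrow> reduced_chain (tgt (s, ls)) (rev (map flip_letter ls))
    \<and> tgt (tgt (s, ls), rev (map flip_letter ls)) = s"
proof (induction ls rule: rev_induct)
  case Nil
  then show ?case by simp
next
  case (snoc l ls)
  obtain a b k where l: "l = (a, b, k)" by (cases l)
  have "reduced_chain s ls" "a = tgt (s, ls)" "a \<noteq> b" "ls \<noteq> [] \<longrightarrow> k \<noteq> snd (snd (last ls))"
    using snoc.prems unfolding l by (auto simp: reduced_chain_snoc)
  then show ?case using snoc.IH unfolding l by (auto simp: hd_rev last_map)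
qed

lemma foldl_app_letter_rev_flip:
  "reduced_chain s ls \<Longrightarrow> foldl app_letter (s, ls) (rev (map flip_letter ls)) = (s, [])"
proof (induction ls rule: rev_induct)
  case Nil
  then show ?case by simp
next
  case (snoc l ls)
  then show ?case by (cases l) (simp add: reduced_chain_snoc)
qed

lemma ginv_reduced:
  assumes "reduced_arrow x"
  shows "reduced_arrow (ginv x)" and "tgt (ginv x) = fst x" and "fst (ginv x) = tgt x"
  using reduced_chain_rev_flip[of "fst x" "snd x"] assms
  by (simp_all add: reduced_arrow_def ginv_flip_letter)

lemma gmult_right_inverse: "reduced_arrow x \<Longrightarrow> gmult x (ginv x) = (fst x, [])"
  using foldl_app_letter_rev_flip[of "fst x" "snd x"]
  by (simp add: reduced_arrow_def ginv_flip_letter gmult_def)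

lemma ginv_ginv: "reduced_arrow x \<Longrightarrow> ginv (ginv x) = x"
  using ginv_reduced(2)[of x] by (simp add: ginv_flip_letter rev_map comp_def)

lemma gmult_left_inverse: "reduced_arrow x \<Longrightarrow> gmult (ginv x) x = (tgt x, [])"
  using gmult_right_inverse[of "ginv x"] ginv_reduced[of x] ginv_ginv[of x] by simp

lemma gmult_inverse_cancel_left:
  assumes "reduced_arrow g" "reduced_arrow u" "fst u = tgt g"
  shows "gmult (ginv g) (gmult g u) = u"
proof -
  have "gmult (ginv g) (gmult g u) = gmult (gmult (ginv g) g) u"
    by (rule gmult_assoc) (use ginv_reduced assms in auto)
  also have "\<dots> = u" using gmult_left_inverse[OF assms(1)] gmult_unit_left[OF assms(2)] assms(3) by simp
  finally show ?thesis .
qed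

lemma gmult_left_cancel:
  assumes "reduced_arrow g" "reduced_arrow u" "reduced_arrow v" "fst u = tgt g" "fst v = tgt g"
  shows "gmult g u = gmult g v \<longleftrightarrow> u = v"
  using gmult_inverse_cancel_left[of g] assms by metis

section \<open>First-step analysis of hitting probabilities\<close>

definition moves :: "nat \<Rightarrow> (nat \<times> int) set" where
  "moves N = {1..N} \<times> {-1, 1}"

definition step_prob :: "(nat \<Rightarrow> nat \<Rightarrow> int \<Rightarrow> real) \<Rightarrow> arrow \<Rightarrow> nat \<times> int \<Rightarrow> real" where
  "step_prob p x m = (if fst m \<noteq> tgt x then p (tgt x) (fst m) (snd m) else 0)"

lemma finite_moves [simp]: "finite (moves N)"
  by (simp add: moves_def)

lemma hitprob_0: "hitprob N p x y 0 = (if x = y then 1 else 0)"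
proof -
  have "{ms. length ms = 0 \<and> set ms \<subseteq> {1..N} \<times> {-1::int, 1}} = {[]}" by auto
  then show ?thesis by (simp add: hitprob_def)
qed

lemma hitprob_Suc:
  "hitprob N p x y (Suc n) =
    (if x = y then 0 else (\<Sum>m\<in>moves N. step_prob p x m * hitprob N p (move x m) y n))"
proof -
  define paths where "paths n = {ms. length ms = n \<and> set ms \<subseteq> moves N}" for n
  define first_hit where
    "first_hit n x ms = (if (\<forall>k < n. walk x ms ! k \<noteq> y) \<and> walk x ms ! n = y
      then pathprob p x ms else 0)" for n x ms
  have hitprob_eq: "hitprob N p x y n = (\<Sum>ms\<in>paths n. first_hit n x ms)" for n x
    by (simp add: hitprob_def paths_def first_hit_def moves_def)
  have paths_Suc: "paths (Suc n) = (\<lambda>(m, ms). m # ms) ` (moves N \<times> paths n)"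
    by (auto simp: paths_def length_Suc_conv image_def)
  have inj: "inj_on (\<lambda>(m, ms). m # ms) (moves N \<times> paths n)"
    by (auto simp: inj_on_def)
  have first_hit_Cons: "first_hit (Suc n) x (m # ms)
      = (if x = y then 0 else step_prob p x m * first_hit n (move x m) ms)" for m ms
  proof -
    have "(\<forall>k < Suc n. walk x (m # ms) ! k \<noteq> y)
        \<longleftrightarrow> x \<noteq> y \<and> (\<forall>k < n. walk (move x m) ms ! k \<noteq> y)"
      by (auto simp: less_Suc_eq_0_disj)
    then show ?thesis by (auto simp: first_hit_def step_prob_def)
  qed
  have "hitprob N p x y (Suc n) = (\<Sum>(m, ms)\<in>moves N \<times> paths n. first_hit (Suc n) x (m # ms))"
    unfolding hitprob_eq paths_Suc sum.reindex[OF inj] by (simp add: case_prod_beta comp_def)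
  also have "\<dots> = (\<Sum>m\<in>moves N. \<Sum>ms\<in>paths n. first_hit (Suc n) x (m # ms))"
    by (rule sum.cartesian_product[symmetric])
  also have "\<dots> = (if x = y then 0 else (\<Sum>m\<in>moves N. step_prob p x m * hitprob N p (move x m) y n))"
    by (simp add: first_hit_Cons hitprob_eq sum_distrib_left)
  finally show ?thesis .
qed

lemma hitprob_self: "hitprob N p x x n = (if n = 0 then 1 else 0)"
  by (cases n) (simp_all add: hitprob_0 hitprob_Suc)

lemma move_reduced:
  assumes "reduced_arrow u" "fst m \<noteq> tgt u"
  shows "reduced_arrow (move u m)" and "fst (move u m) = fst u" and "tgt (move u m) = fst m"
  using reduced_chain_app_letter[of "fst u" "snd u" "tgt u" "fst m" "snd m"] assms
  by (simp_all add: reduced_arrow_def move_def)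

text \<open>Left translation invariance: the walk from \<open>g u\<close> is \<open>g\<close> times the walk from \<open>u\<close>.\<close>

lemma hitprob_gmult_left:
  assumes "reduced_arrow g" "reduced_arrow u" "reduced_arrow v" "fst u = tgt g" "fst v = tgt g"
  shows "hitprob N p (gmult g u) (gmult g v) n = hitprob N p u v n"
  using assms(2,4)
proof (induction n arbitrary: u)
  case 0
  then show ?case using gmult_left_cancel[of g u v] assms by (simp add: hitprob_0)
next
  case (Suc n)
  have tgt_gu: "tgt (gmult g u) = tgt u"
    using gmult_reduced(2)[of g u] Suc.prems assms(1) by simp
  have "step_prob p (gmult g u) m * hitprob N p (move (gmult g u) m) (gmult g v) n
      = step_prob p u m * hitprob N p (move u m) v n" for m
  proof (cases "fst m = tgt u")
    case True
    then show ?thesis by (simp add: step_prob_def tgt_gu)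
  next
    case False
    have "move (gmult g u) m = gmult g (move u m)"
      using gmult_app_letter[of g u "tgt u" "fst m" "snd m"] Suc.prems assms(1) False
      by (simp add: move_def tgt_gu)
    moreover have "hitprob N p (gmult g (move u m)) (gmult g v) n = hitprob N p (move u m) v n"
      using Suc.IH move_reduced[of u m] Suc.prems False by simp
    ultimately show ?thesis by (simp add: step_prob_def tgt_gu)
  qed
  then show ?case
    using gmult_left_cancel[of g u v] Suc.prems assms by (simp add: hitprob_Suc)
qed

text \<open>First-passage decomposition: if every path from \<open>x\<close> to \<open>y\<close> has to leave \<open>U\<close>, and
  \<open>U\<close> can only be left through \<open>z\<close>, then a first visit to \<open>y\<close> splits at the first visit
  to \<open>z\<close>.\<close>

lemma hitprob_split:
  assumes "x \<in> U" "y \<notin> U" "\<And>x m. x \<in> U \<Longrightarrow> x \<noteq> z \<Longrightarrow> move x m \<in> U"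
  shows "hitprob N p x y n = (\<Sum>a\<le>n. hitprob N p x z a * hitprob N p z y (n - a))"
  using assms(1)
proof (induction n arbitrary: x)
  case 0
  then show ?case using assms(2) by (auto simp: hitprob_0)
next
  case (Suc n)
  show ?case
  proof (cases "x = z")
    case True
    then show ?thesis by (simp add: hitprob_self sum.atMost_Suc_shift del: sum.atMost_Suc)
  next
    case False
    have "x \<noteq> y" using Suc.prems assms(2) by auto
    have "hitprob N p x y (Suc n) = (\<Sum>m\<in>moves N. step_prob p x m
        * (\<Sum>a\<le>n. hitprob N p (move x m) z a * hitprob N p z y (n - a)))"
      using Suc.IH[OF assms(3)[OF Suc.prems False]] \<open>x \<noteq> y\<close> by (simp add: hitprob_Suc)
    also have "\<dots> = (\<Sum>a\<le>n. (\<Sum>m\<in>moves N. step_prob p x m * hitprob N p (move x m) z a)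
        * hitprob N p z y (n - a))"
      by (simp add: sum_distrib_left sum_distrib_right mult.assoc sum.swap[of _ "moves N"])
    also have "\<dots> = (\<Sum>a\<le>n. hitprob N p x z (Suc a) * hitprob N p z y (Suc n - Suc a))"
      using False by (simp add: hitprob_Suc)
    also have "\<dots> = (\<Sum>a\<le>Suc n. hitprob N p x z a * hitprob N p z y (Suc n - a))"
      using False by (simp add: sum.atMost_Suc_shift hitprob_0 del: sum.atMost_Suc)
    finally show ?thesis .
  qed
qed

lemma RR_fps_split:
  assumes "x \<in> U" "y \<notin> U" "\<And>x m. x \<in> U \<Longrightarrow> x \<noteq> z \<Longrightarrow> move x m \<in> U"
  shows "RR_fps N p x y = RR_fps N p x z * RR_fps N p z y"
  by (rule fps_ext) (simp add: RR_fps_def fps_mult_nth atLeast0AtMost hitprob_split[OF assms])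

lemma RR_fps_gmult_left:
  assumes "reduced_arrow g" "reduced_arrow u" "reduced_arrow v" "fst u = tgt g" "fst v = tgt g"
  shows "RR_fps N p (gmult g u) (gmult g v) = RR_fps N p u v"
  by (rule fps_ext) (simp add: RR_fps_def hitprob_gmult_left[OF assms])

section \<open>Factorization along a reduced word\<close>

lemma app_letter_stays_off_branch:
  assumes "\<not> (2 \<le> length ls \<and> hd ls = l)" "ls \<noteq> [l]"
  shows "\<not> (2 \<le> length (snd (app_letter (s, ls) l')) \<and> hd (snd (app_letter (s, ls) l')) = l)"
proof (cases ls rule: rev_exhaust)
  case Nil
  then show ?thesis by (simp add: app_letter_def Let_def)
next
  case (snoc ys y)
  then show ?thesis using assms by (cases ys) (auto simp: app_letter_def Let_def)
qed

lemma Rgen_fps_eq_RR_fps: "Rgen_fps N p a b k = RR_fps N p (a, []) (a, [(a, b, k)])"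
  by (simp add: Rgen_fps_def gmult_def)

lemma RR_fps_unit_reduced_chain:
  "reduced_chain t ws \<Longrightarrow> RR_fps N p (t, []) (t, ws) = (\<Prod>(a, b, k)\<leftarrow>ws. Rgen_fps N p a b k)"
proof (induction ws arbitrary: t)
  case Nil
  show ?case by (rule fps_ext) (simp add: RR_fps_def hitprob_self)
next
  case (Cons l rest)
  obtain a b k where l: "l = (a, b, k)" by (cases l)
  have "a = t" "a \<noteq> b" "reduced_chain b rest" using Cons.prems l by auto
  show ?case
  proof (cases "rest = []")
    case True
    then show ?thesis using l \<open>a = t\<close> by (simp add: Rgen_fps_eq_RR_fps)
  next
    case False
    text \<open>Moves only change the last letter, so a walk from \<open>e\<^sub>t\<close> can only reach words
      beginning with \<open>l\<close> and of length at least two by passing through \<open>l\<close>.\<close>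
    define U where "U = {x. fst x = t \<and> \<not> (2 \<le> length (snd x) \<and> hd (snd x) = l)}"
    have "move x m \<in> U" if "x \<in> U" "x \<noteq> (t, [l])" for x m
      using that app_letter_stays_off_branch[of "snd x" l "fst x"]
      unfolding U_def move_def by (cases x) auto
    then have "RR_fps N p (t, []) (t, l # rest)
        = RR_fps N p (t, []) (t, [l]) * RR_fps N p (t, [l]) (t, l # rest)"
      by (intro RR_fps_split[of _ U]) (use False in \<open>auto simp: U_def Suc_le_eq\<close>)
    moreover have "RR_fps N p (t, [l]) (t, l # rest) = RR_fps N p (b, []) (b, rest)"
    proof -
      have "gmult (t, [l]) (b, []) = (t, [l])" by (simp add: gmult_def)
      moreover have "gmult (t, [l]) (b, rest) = (t, l # rest)"
        using foldl_app_letter_reduced[of t "[l]" rest] Cons.prems by (simp add: gmult_def)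
      ultimately show ?thesis
        using RR_fps_gmult_left[of "(t, [l])" "(b, [])" "(b, rest)" N p] Cons.prems l
        by (simp add: reduced_arrow_def)
    qed
    ultimately show ?thesis
      using Cons.IH[OF \<open>reduced_chain b rest\<close>] l \<open>a = t\<close> by (simp add: Rgen_fps_eq_RR_fps)
  qed
qed

lemma RR_fps_eq_prod_Rgen_fps:
  assumes "reduced_arrow w1" "reduced_arrow w2" "fst w1 = fst w2"
  shows "RR_fps N p w1 w2 = (\<Prod>(a, b, k)\<leftarrow>snd (gmult (ginv w1) w2). Rgen_fps N p a b k)"
proof -
  define v where "v = gmult (ginv w1) w2"
  have v: "reduced_arrow v" "fst v = tgt w1"
    using gmult_reduced[of "ginv w1" w2] ginv_reduced[OF assms(1)] assms unfolding v_def by auto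
  have "gmult w1 v = w2"
    using gmult_assoc[of w1 "ginv w1" w2] gmult_right_inverse[OF assms(1)] gmult_unit_left[OF assms(2)]
      ginv_reduced[OF assms(1)] assms
    unfolding v_def by simp
  moreover have "gmult w1 (tgt w1, []) = w1" by (simp add: gmult_def)
  moreover have "v = (tgt w1, snd v)" by (simp flip: v(2))
  ultimately have "RR_fps N p w1 w2 = RR_fps N p (tgt w1, []) (tgt w1, snd v)"
    using RR_fps_gmult_left[of w1 "(tgt w1, [])" v N p] assms(1) v
    by (simp add: reduced_arrow_def)
  also have "\<dots> = (\<Prod>(a, b, k)\<leftarrow>snd v. Rgen_fps N p a b k)"
    using v by (intro RR_fps_unit_reduced_chain) (simp add: reduced_arrow_def)
  finally show ?thesis unfolding v_def .
qed

definition arrow_in_range :: "nat \<Rightarrow> arrow \<Rightarrow> bool" where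
  "arrow_in_range N x \<longleftrightarrow>
     fst x \<in> {1..N} \<and> (\<forall>l\<in>set (snd x). fst l \<in> {1..N} \<and> fst (snd l) \<in> {1..N})"

lemma reduced_word_Cons:
  "reduced_word N i (l # ls) \<longleftrightarrow> fst l = i \<and> fst l \<in> {1..N} \<and> fst (snd l) \<in> {1..N}
     \<and> fst l \<noteq> fst (snd l) \<and> snd (snd l) \<in> {-1, 1}
     \<and> (ls \<noteq> [] \<longrightarrow> snd (snd (hd ls)) = - snd (snd l)) \<and> reduced_word N (fst (snd l)) ls"
  unfolding reduced_word_def
  by (auto simp: less_Suc_eq_0_disj hd_conv_nth nth_Cons split: nat.splits)

lemma reduced_word_imp_reduced_chain:
  "reduced_word N i ls \<Longrightarrow> reduced_chain i ls"
  by (induction ls arbitrary: i) (auto simp: reduced_word_Cons)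

lemma reduced_word_letters_in_range:
  "reduced_word N i ls \<Longrightarrow> l \<in> set ls \<Longrightarrow> fst l \<in> {1..N} \<and> fst (snd l) \<in> {1..N}"
  by (induction ls arbitrary: i) (auto simp: reduced_word_Cons simp del: atLeastAtMost_iff)

lemma arrows_from_reduced:
  assumes "w \<in> arrows_from N i" "i \<in> {1..N}"
  shows "reduced_arrow w" and "arrow_in_range N w" and "fst w = i"
  using assms reduced_word_imp_reduced_chain reduced_word_letters_in_range
  by (auto simp: arrows_from_def reduced_arrow_def arrow_in_range_def)

lemma tgt_in_range: "arrow_in_range N x \<Longrightarrow> tgt x \<in> {1..N}"
  by (cases "snd x = []") (auto simp: arrow_in_range_def tgt_def)

lemma app_letter_in_range:
  "arrow_in_range N x \<Longrightarrow> fst l \<in> {1..N} \<Longrightarrow> fst (snd l) \<in> {1..N}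
    \<Longrightarrow> arrow_in_range N (app_letter x l)"
  unfolding arrow_in_range_def app_letter_def Let_def by (auto dest: in_set_butlastD)

lemma foldl_app_letter_in_range:
  "arrow_in_range N x \<Longrightarrow> \<forall>l\<in>set ls. fst l \<in> {1..N} \<and> fst (snd l) \<in> {1..N}
    \<Longrightarrow> arrow_in_range N (foldl app_letter x ls)"
  by (induction ls arbitrary: x) (auto simp: app_letter_in_range simp del: atLeastAtMost_iff)

lemma gmult_in_range:
  "arrow_in_range N x \<Longrightarrow> arrow_in_range N y \<Longrightarrow> arrow_in_range N (gmult x y)"
  unfolding gmult_def by (rule foldl_app_letter_in_range) (auto simp: arrow_in_range_def)

lemma ginv_in_range: "arrow_in_range N x \<Longrightarrow> arrow_in_range N (ginv x)"
  using tgt_in_range[of N x] by (auto simp: arrow_in_range_def ginv_flip_letter flip_letter_def)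

lemma move_in_range: "arrow_in_range N x \<Longrightarrow> m \<in> moves N \<Longrightarrow> arrow_in_range N (move x m)"
  unfolding move_def using tgt_in_range[of N x] by (intro app_letter_in_range) (auto simp: moves_def)

section \<open>Convergence on the closed unit disc\<close>

lemma step_prob_nonneg:
  "valid_probs N p \<Longrightarrow> arrow_in_range N x \<Longrightarrow> m \<in> moves N \<Longrightarrow> 0 \<le> step_prob p x m"
  using tgt_in_range[of N x] unfolding valid_probs_def step_prob_def moves_def
  by (cases m) (auto intro: less_imp_le)

lemma sum_step_prob:
  assumes "valid_probs N p" "arrow_in_range N x"
  shows "(\<Sum>m\<in>moves N. step_prob p x m) = 1"
proof -
  define t where "t = tgt x"
  have t: "t \<in> {1..N}" using tgt_in_range[OF assms(2)] by (simp add: t_def)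
  have "(\<Sum>m\<in>moves N. step_prob p x m) = (\<Sum>j\<in>{1..N}. \<Sum>k\<in>{-1::int, 1}. step_prob p x (j, k))"
    unfolding moves_def by (subst sum.cartesian_product) (simp add: case_prod_beta)
  also have "\<dots> = (\<Sum>j\<in>{1..N}. if j \<noteq> t then (\<Sum>k\<in>{-1::int, 1}. p t j k) else 0)"
    by (rule sum.cong) (auto simp: step_prob_def t_def)
  also have "\<dots> = (\<Sum>j\<in>{1..N} - {t}. \<Sum>k\<in>{-1::int, 1}. p t j k)"
    by (simp add: sum.If_cases Diff_eq Compl_eq)
  also have "\<dots> = 1" using assms(1) t unfolding valid_probs_def by blast
  finally show ?thesis .
qed

lemma hitprob_nonneg: "valid_probs N p \<Longrightarrow> arrow_in_range N x \<Longrightarrow> 0 \<le> hitprob N p x y n"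
proof (induction n arbitrary: x)
  case 0
  then show ?case by (simp add: hitprob_0)
next
  case (Suc n)
  have "0 \<le> step_prob p x m * hitprob N p (move x m) y n" if "m \<in> moves N" for m
    using Suc step_prob_nonneg move_in_range that by simp
  then show ?case by (simp add: hitprob_Suc sum_nonneg)
qed

lemma sum_hitprob_le_1:
  "valid_probs N p \<Longrightarrow> arrow_in_range N x \<Longrightarrow> (\<Sum>n<K. hitprob N p x y n) \<le> 1"
proof (induction K arbitrary: x)
  case 0
  then show ?case by simp
next
  case (Suc K)
  show ?case
  proof (cases "x = y")
    case True
    then show ?thesis by (simp add: sum.lessThan_Suc_shift hitprob_0 hitprob_Suc del: sum.lessThan_Suc)
  next
    case False
    have "(\<Sum>n<Suc K. hitprob N p x y n)
        = (\<Sum>n<K. \<Sum>m\<in>moves N. step_prob p x m * hitprob N p (move x m) y n)"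
      using False by (simp add: sum.lessThan_Suc_shift hitprob_0 hitprob_Suc del: sum.lessThan_Suc)
    also have "\<dots> = (\<Sum>m\<in>moves N. step_prob p x m * (\<Sum>n<K. hitprob N p (move x m) y n))"
      by (simp add: sum_distrib_left sum.swap[of _ "{..<K}"])
    also have "\<dots> \<le> (\<Sum>m\<in>moves N. step_prob p x m * 1)"
      by (intro sum_mono mult_left_mono) (use Suc step_prob_nonneg move_in_range in auto)
    also have "\<dots> = 1" using sum_step_prob Suc.prems by simp
    finally show ?thesis .
  qed
qed

definition nonneg_summable_fps :: "real fps \<Rightarrow> bool" where
  "nonneg_summable_fps F \<longleftrightarrow> (\<forall>n. 0 \<le> fps_nth F n) \<and> summable (fps_nth F)"

definition fps_value :: "real fps \<Rightarrow> complex \<Rightarrow> complex" where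
  "fps_value F z = (\<Sum>n. complex_of_real (fps_nth F n) * z ^ n)"

lemma RR_eq_fps_value: "RR N p x y z = fps_value (RR_fps N p x y) z"
  by (simp add: RR_def fps_value_def RR_fps_def)

lemma Rgen_eq_fps_value: "Rgen N p a b k z = fps_value (Rgen_fps N p a b k) z"
  by (simp add: Rgen_def Rgen_fps_def RR_eq_fps_value)

lemma nonneg_summable_RR_fps:
  assumes "valid_probs N p" "arrow_in_range N x"
  shows "nonneg_summable_fps (RR_fps N p x y)"
proof -
  have "summable (hitprob N p x y)"
    by (rule summableI_nonneg_bounded[where x = 1])
      (use hitprob_nonneg[OF assms] sum_hitprob_le_1[OF assms] in auto)
  moreover have "fps_nth (Abs_fps (hitprob N p x y)) = hitprob N p x y" by (rule ext) simp
  ultimately show ?thesis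
    using hitprob_nonneg[OF assms] by (simp add: nonneg_summable_fps_def RR_fps_def)
qed

lemma nonneg_summable_Rgen_fps:
  "valid_probs N p \<Longrightarrow> a \<in> {1..N} \<Longrightarrow> nonneg_summable_fps (Rgen_fps N p a b k)"
  unfolding Rgen_fps_def by (rule nonneg_summable_RR_fps) (auto simp: arrow_in_range_def)

lemma summable_norm_fps_value:
  assumes "nonneg_summable_fps F" "norm z \<le> 1"
  shows "summable (\<lambda>n. norm (complex_of_real (fps_nth F n) * z ^ n))"
proof (rule summable_comparison_test'[where g = "fps_nth F" and N = 0])
  show "summable (fps_nth F)" using assms(1) by (simp add: nonneg_summable_fps_def)
next
  fix n :: nat
  have "norm (z ^ n) \<le> 1" using assms(2) by (simp add: norm_power power_le_one)
  then show "norm (norm (complex_of_real (fps_nth F n) * z ^ n)) \<le> fps_nth F n"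
    using assms(1) by (simp add: nonneg_summable_fps_def norm_mult mult_left_le)
qed

lemma nonneg_summable_fps_mult:
  assumes "nonneg_summable_fps F" "nonneg_summable_fps G"
  shows "nonneg_summable_fps (F * G)"
proof -
  have "summable (\<lambda>k. norm (fps_nth F k))" "summable (\<lambda>k. norm (fps_nth G k))"
    using assms by (simp_all add: nonneg_summable_fps_def)
  then have "summable (\<lambda>k. \<Sum>i\<le>k. fps_nth F i * fps_nth G (k - i))"
    by (rule summable_Cauchy_product)
  moreover have "fps_nth (F * G) = (\<lambda>k. \<Sum>i\<le>k. fps_nth F i * fps_nth G (k - i))"
    by (rule ext) (simp add: fps_mult_nth atLeast0AtMost)
  ultimately show ?thesis
    using assms by (auto simp: nonneg_summable_fps_def fps_mult_nth atLeast0AtMost intro!: sum_nonneg)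
qed

lemma fps_value_mult:
  assumes "nonneg_summable_fps F" "nonneg_summable_fps G" "norm z \<le> 1"
  shows "fps_value (F * G) z = fps_value F z * fps_value G z"
proof -
  have coeff: "(\<Sum>i\<le>k. (complex_of_real (fps_nth F i) * z ^ i)
        * (complex_of_real (fps_nth G (k - i)) * z ^ (k - i)))
      = complex_of_real (fps_nth (F * G) k) * z ^ k" for k
  proof -
    have "(\<Sum>i\<le>k. (complex_of_real (fps_nth F i) * z ^ i)
        * (complex_of_real (fps_nth G (k - i)) * z ^ (k - i)))
      = (\<Sum>i\<le>k. complex_of_real (fps_nth F i * fps_nth G (k - i)) * z ^ k)"
      by (rule sum.cong) (auto simp: algebra_simps simp flip: power_add)
    also have "\<dots> = complex_of_real (fps_nth (F * G) k) * z ^ k"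
      by (simp add: fps_mult_nth atLeast0AtMost sum_distrib_right)
    finally show ?thesis .
  qed
  have "fps_value F z * fps_value G z = (\<Sum>k. \<Sum>i\<le>k. (complex_of_real (fps_nth F i) * z ^ i)
      * (complex_of_real (fps_nth G (k - i)) * z ^ (k - i)))"
    unfolding fps_value_def
    by (rule Cauchy_product) (use summable_norm_fps_value assms in auto)
  then show ?thesis by (simp add: coeff fps_value_def)
qed

lemma nonneg_summable_prod_list:
  "\<forall>x\<in>set xs. nonneg_summable_fps (f x) \<Longrightarrow> nonneg_summable_fps (\<Prod>x\<leftarrow>xs. f x)"
proof (induction xs)
  case Nil
  have "fps_nth 1 = (\<lambda>n. if n = 0 then (1::real) else 0)"
    by (rule ext) simp
  then show ?case
    using summable_single[of 0 "\<lambda>_. 1::real"] by (simp add: nonneg_summable_fps_def)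
next
  case (Cons x xs)
  then show ?case by (simp add: nonneg_summable_fps_mult)
qed

lemma fps_value_prod_list:
  assumes "\<forall>x\<in>set xs. nonneg_summable_fps (f x)" "norm z \<le> 1"
  shows "fps_value (\<Prod>x\<leftarrow>xs. f x) z = (\<Prod>x\<leftarrow>xs. fps_value (f x) z)"
  using assms(1)
proof (induction xs)
  case Nil
  have "(\<lambda>n. complex_of_real (fps_nth 1 n) * z ^ n) = (\<lambda>n. if n = 0 then 1 else 0)"
    by (simp add: fun_eq_iff fps_one_nth)
  then show ?case using sums_single[of 0 "\<lambda>_. 1::complex"] by (simp add: fps_value_def sums_iff)
next
  case (Cons x xs)
  then show ?case by (simp add: fps_value_mult nonneg_summable_prod_list assms(2))
qed

theorem lemma6p2:
  fixes N :: nat and p :: "nat \<Rightarrow> nat \<Rightarrow> int \<Rightarrow> real"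
    and i :: nat and w1 w2 :: arrow and ws :: "letter list"
  assumes "N \<ge> 3"
    and "valid_probs N p"
    and "i \<in> {1..N}"
    and "w1 \<in> arrows_from N i" and "w2 \<in> arrows_from N i" and "w1 \<noteq> w2"
    and "ws = snd (gmult (ginv w1) w2)"
  shows "RR_fps N p w1 w2 = prod_list (map (\<lambda>(a, b, k). Rgen_fps N p a b k) ws)
         \<and> (\<forall>z::complex. norm z \<le> 1 \<longrightarrow>
              RR N p w1 w2 z = prod_list (map (\<lambda>(a, b, k). Rgen N p a b k z) ws))"
proof -
  note w1 = arrows_from_reduced[OF assms(4,3)] and w2 = arrows_from_reduced[OF assms(5,3)]
  have fps: "RR_fps N p w1 w2 = (\<Prod>(a, b, k)\<leftarrow>ws. Rgen_fps N p a b k)"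
    using RR_fps_eq_prod_Rgen_fps[OF w1(1) w2(1)] w1(3) w2(3) assms(7) by simp
  have "arrow_in_range N (gmult (ginv w1) w2)"
    using gmult_in_range[OF ginv_in_range[OF w1(2)] w2(2)] .
  then have "\<forall>(a, b, k)\<in>set ws. nonneg_summable_fps (Rgen_fps N p a b k)"
    using nonneg_summable_Rgen_fps[OF assms(2)] assms(7) by (auto simp: arrow_in_range_def)
  then have "RR N p w1 w2 z = (\<Prod>(a, b, k)\<leftarrow>ws. Rgen N p a b k z)" if "norm z \<le> 1" for z
    using fps_value_prod_list[of ws "\<lambda>(a, b, k). Rgen_fps N p a b k" z] that
    by (simp add: RR_eq_fps_value fps Rgen_eq_fps_value case_prod_unfold)
  with fps show ?thesis by blast
qed

end
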